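(* Let $\{\vec S_n\}_{n=1}^6$ (indices modulo $6$) be an oriented, augmented right-angled hexagon in $\mathbb H^4$. For $n=1,\dots,6$ let $\tau_n$ be the unique orientation-preserving isometry of $\mathbb H^4$ with $\tau_n(\vec S_n)=\vec S_n$ and $\tau_n(\vec S_{n-1})=\vec S_{n+1}$; set $\iota_n=(\tau_n\cdots\tau_2\tau_1)^{-1}$ (with $\iota_0=\mathrm{id}$) and $\eta_n=\iota_{n-1}\tau_n\iota_{n-1}^{-1}$. Then (1) $\tau_6\tau_5\cdots\tau_1=\mathrm{id}$; (2) $\eta_1\eta_2\cdots\eta_6=\mathrm{id}$; (3) for $n=1,3,5$: $\iota_n(\vec S_n)=\vec S_1$ and $\iota_n(\vec S_{n+1})=\vec S_6$; (4) for $n=2,4,6$: $\iota_n(\vec S_n)=\vec S_6$ and $\iota_n(\vec S_{n+1})=\vec S_1$.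
   Context: $\mathbb H^4$ is hyperbolic 4-space (oriented). Lines and planes are complete totally geodesic submanifolds of dimension 1 and 2. A flag is a pair $(L,\Pi)$ of a line $L$ contained in a plane $\Pi$; an oriented flag has both $L$ and $\Pi$ oriented. Two lines are orthogonal if they meet perpendicularly; a line $L'$ and a flag $(L,\Pi)$ are orthogonal if $L'$ meets $L$ and is perpendicular to $\Pi$. An augmented right-angled hexagon in $\mathbb H^4$ is a cyclic six-tuple $\{S_n\}_{n=1}^6$ where either $S_1,S_3,S_5$ are lines and $S_2,S_4,S_6$ flags, or vice versa, such that $S_n$ and $S_{n+1}$ are orthogonal for all $n$; it is oriented if each $S_n$ is oriented. For an oriented flag and an oriented line orthogonal to each other, there is a unique orientation-preserving isometry of $\mathbb H^4$ sending this pair to any other such pair (so each $\tau_n$ exists and is unique). *)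

theory Defs
  imports "HOL-Analysis.Analysis" "HOL-Library.Numeral_Type"
begin

text \<open>Hyperboloid model of hyperbolic 4-space inside Minkowski space R^(4,1).
  Coordinate 0 is the time-like one.\<close>

type_synonym vec = "real^5"
type_synonym mat5 = "real^5^5"

definition mink :: "vec \<Rightarrow> vec \<Rightarrow> real" where
  "mink x y = (\<Sum>i\<in>UNIV. (if i = 0 then -1 else 1) * (x $ i) * (y $ i))"

definition H4 :: "vec set" where
  "H4 = {x. mink x x = -1 \<and> x $ 0 > 0}"

definition is_or_isom :: "mat5 \<Rightarrow> bool" where
  "is_or_isom A \<longleftrightarrow> (\<forall>x y. mink (A *v x) (A *v y) = mink x y) \<and>
     (\<forall>x\<in>H4. A *v x \<in> H4) \<and> det A > 0"

definition rows5 :: "vec \<Rightarrow> vec \<Rightarrow> vec \<Rightarrow> vec \<Rightarrow> vec \<Rightarrow> mat5" where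
  "rows5 a b c d e = (\<chi> i. if i = 0 then a else if i = 1 then b else if i = 2 then c
                           else if i = 3 then d else e)"

text \<open>An oriented k-dimensional totally geodesic subspace of H^4 is represented by an
  oriented (k+1)-dimensional linear subspace of R^(4,1) meeting H4, given by an ordered basis.\<close>
type_synonym oline = "vec \<times> vec"
type_synonym oplane = "vec \<times> vec \<times> vec"

definition lspan :: "oline \<Rightarrow> vec set" where
  "lspan L = span {fst L, snd L}"

definition pspan :: "oplane \<Rightarrow> vec set" where
  "pspan P = (case P of (a, b, c) \<Rightarrow> span {a, b, c})"

definition is_oline :: "oline \<Rightarrow> bool" where
  "is_oline L \<longleftrightarrow> (case L of (a, b) \<Rightarrow> dim {a, b} = 2) \<and> lspan L \<inter> H4 \<noteq> {}"

definition is_oplane :: "oplane \<Rightarrow> bool" where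
  "is_oplane P \<longleftrightarrow> (case P of (a, b, c) \<Rightarrow> dim {a, b, c} = 3) \<and> pspan P \<inter> H4 \<noteq> {}"

text \<open>Two ordered bases define the same oriented subspace iff they span the same subspace
  and the change of basis has positive determinant (tested by completing to a basis of R^5).\<close>
definition same_oline :: "oline \<Rightarrow> oline \<Rightarrow> bool" where
  "same_oline L L' \<longleftrightarrow> is_oline L \<and> is_oline L' \<and> lspan L = lspan L' \<and>
     (\<exists>w1 w2 w3. det (rows5 (fst L) (snd L) w1 w2 w3) * det (rows5 (fst L') (snd L') w1 w2 w3) > 0)"

definition same_oplane :: "oplane \<Rightarrow> oplane \<Rightarrow> bool" where
  "same_oplane P P' \<longleftrightarrow> is_oplane P \<and> is_oplane P' \<and> pspan P = pspan P' \<and>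
     (case P of (a, b, c) \<Rightarrow> case P' of (a', b', c') \<Rightarrow>
        (\<exists>w1 w2. det (rows5 a b c w1 w2) * det (rows5 a' b' c' w1 w2) > 0))"

datatype hobj = HLine oline | HFlag oline oplane

fun wf_hobj :: "hobj \<Rightarrow> bool" where
  "wf_hobj (HLine L) = is_oline L"
| "wf_hobj (HFlag L P) = (is_oline L \<and> is_oplane P \<and> lspan L \<subseteq> pspan P)"

fun is_line :: "hobj \<Rightarrow> bool" where
  "is_line (HLine _) = True"
| "is_line (HFlag _ _) = False"

fun is_flag :: "hobj \<Rightarrow> bool" where
  "is_flag (HLine _) = False"
| "is_flag (HFlag _ _) = True"

fun heq :: "hobj \<Rightarrow> hobj \<Rightarrow> bool" where
  "heq (HLine L) (HLine L') = same_oline L L'"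
| "heq (HFlag L P) (HFlag L' P') = (same_oline L L' \<and> same_oplane P P')"
| "heq _ _ = False"

fun act :: "mat5 \<Rightarrow> hobj \<Rightarrow> hobj" where
  "act A (HLine (a, b)) = HLine (A *v a, A *v b)"
| "act A (HFlag (a, b) (c, d, e)) = HFlag (A *v a, A *v b) (A *v c, A *v d, A *v e)"

definition orth_lf :: "oline \<Rightarrow> oline \<Rightarrow> oplane \<Rightarrow> bool" where
  "orth_lf L' L P \<longleftrightarrow> (\<exists>p u. p \<in> H4 \<and> p \<in> lspan L \<and> u \<noteq> 0 \<and> mink p u = 0 \<and>
      lspan L' = span {p, u} \<and> (\<forall>w\<in>pspan P. mink u w = 0))"

fun orth :: "hobj \<Rightarrow> hobj \<Rightarrow> bool" where
  "orth (HLine L') (HFlag L P) = orth_lf L' L P"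
| "orth (HFlag L P) (HLine L') = orth_lf L' L P"
| "orth _ _ = False"

definition nxt :: "nat \<Rightarrow> nat" where "nxt n = (if n = 6 then 1 else n + 1)"
definition prv :: "nat \<Rightarrow> nat" where "prv n = (if n = 1 then 6 else n - 1)"

definition oriented_aug_hexagon :: "(nat \<Rightarrow> hobj) \<Rightarrow> bool" where
  "oriented_aug_hexagon S \<longleftrightarrow> (\<forall>n\<in>{1..6}. wf_hobj (S n)) \<and>
     ((\<forall>n\<in>{1,3,5}. is_line (S n)) \<and> (\<forall>n\<in>{2,4,6}. is_flag (S n)) \<or>
      (\<forall>n\<in>{1,3,5}. is_flag (S n)) \<and> (\<forall>n\<in>{2,4,6}. is_line (S n))) \<and>
     (\<forall>n\<in>{1..6}. orth (S n) (S (nxt n)))"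

fun compo :: "(nat \<Rightarrow> mat5) \<Rightarrow> nat \<Rightarrow> mat5" where
  "compo \<tau> 0 = mat 1"
| "compo \<tau> (Suc n) = \<tau> (Suc n) ** compo \<tau> n"

definition iota :: "(nat \<Rightarrow> mat5) \<Rightarrow> nat \<Rightarrow> mat5" where
  "iota \<tau> n = matrix_inv (compo \<tau> n)"

definition eta :: "(nat \<Rightarrow> mat5) \<Rightarrow> nat \<Rightarrow> mat5" where
  "eta \<tau> n = iota \<tau> (n - 1) ** \<tau> n ** matrix_inv (iota \<tau> (n - 1))"

end

theory Submission
  imports Defs
begin

text \<open>
  Each \<open>\<tau>\<^sub>n\<close> fixes \<open>S\<^sub>n\<close> and carries \<open>S\<^sub>n\<^sub>-\<^sub>1\<close> to \<open>S\<^sub>n\<^sub>+\<^sub>1\<close>, so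
  \<open>\<tau>\<^sub>n \<cdots> \<tau>\<^sub>1\<close> walks the orthogonal pair \<open>(S\<^sub>6, S\<^sub>1)\<close> around the hexagon onto
  \<open>(S\<^sub>n, S\<^sub>n\<^sub>+\<^sub>1)\<close> (in one order or the other, depending on the parity of \<open>n\<close>), and after
  six steps back onto itself. This gives (3) and (4) after inverting, (2) because the \<open>\<eta>\<close>'s
  telescope to \<open>\<tau>\<^sub>6 \<cdots> \<tau>\<^sub>1\<close>, and (1) by rigidity: an orientation-preserving isometry
  fixing an oriented line and an orthogonal oriented flag is the identity. For rigidity, take a
  Minkowski-orthogonal basis \<open>p, v, w, u, z\<close> with \<open>p\<close> the common point, \<open>{p, v}\<close> spanning
  the flag's line, \<open>{p, v, w}\<close> its plane and \<open>{p, u}\<close> the other line. The isometry fixes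
  \<open>p\<close> and preserves these spans, so it acts on \<open>v, w, u, z\<close> by \<open>\<plusminus>1\<close>; the three
  orientations force \<open>+1\<close> on \<open>u, v, w\<close>, and the positive determinant forces \<open>+1\<close> on \<open>z\<close>.
\<close>

lemma exhaust_5:
  fixes x :: 5
  shows "x = 0 \<or> x = 1 \<or> x = 2 \<or> x = 3 \<or> x = 4"
proof (induct x)
  case (of_int z)
  then have "z = 0 \<or> z = 1 \<or> z = 2 \<or> z = 3 \<or> z = 4" by fastforce
  then show ?case by auto
qed

lemma forall_5: "(\<forall>i::5. P i) \<longleftrightarrow> P 0 \<and> P 1 \<and> P 2 \<and> P 3 \<and> P 4"
  using exhaust_5 by metis

lemma UNIV_5: "(UNIV::5 set) = {0, 1, 2, 3, 4}"
  using exhaust_5 by auto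

lemma sum_UNIV_5: "sum f (UNIV::5 set) = f 0 + f 1 + f 2 + f 3 + f 4"
  unfolding UNIV_5 by (simp add: ac_simps)

section \<open>The Minkowski form\<close>

lemma mink_expand: "mink x y = - x$0 * y$0 + x$1 * y$1 + x$2 * y$2 + x$3 * y$3 + x$4 * y$4"
  by (simp add: mink_def sum_UNIV_5)

lemma mink_sym: "mink x y = mink y x"
  by (simp add: mink_expand algebra_simps)

lemma linear_mink: "linear (mink x)"
  by (rule linearI) (simp_all add: mink_expand algebra_simps)

lemma mink_add_right: "mink z (x + y) = mink z x + mink z y"
  and mink_diff_right: "mink z (x - y) = mink z x - mink z y"
  and mink_scale_right: "mink z (c *\<^sub>R x) = c * mink z x"
  and mink_neg_right: "mink z (- x) = - mink z x"
  and mink_zero_right: "mink z 0 = 0"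
  and mink_sum_right: "mink z (\<Sum>v\<in>B. f v) = (\<Sum>v\<in>B. mink z (f v))"
  using linear_add[OF linear_mink] linear_diff[OF linear_mink] linear_scale[OF linear_mink]
    linear_neg[OF linear_mink] linear_0[OF linear_mink] linear_sum[OF linear_mink]
  by (auto simp: o_def)

lemma mink_add_left: "mink (x + y) z = mink x z + mink y z"
  and mink_diff_left: "mink (x - y) z = mink x z - mink y z"
  and mink_scale_left: "mink (c *\<^sub>R x) z = c * mink x z"
  and mink_neg_left: "mink (- x) z = - mink x z"
  and mink_zero_left: "mink 0 z = 0"
  by (simp_all add: mink_sym[of _ z] mink_add_right mink_diff_right mink_scale_right
      mink_neg_right mink_zero_right)

lemmas mink_simps = mink_add_left mink_add_right mink_diff_left mink_diff_right
  mink_scale_left mink_scale_right mink_neg_left mink_neg_right mink_zero_left mink_zero_right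

lemma mink_span_eq_0:
  assumes "x \<in> span S" "\<forall>s\<in>S. mink u s = 0"
  shows "mink u x = 0"
proof -
  have "subspace {x. mink u x = 0}" by (auto simp: subspace_def mink_simps)
  then show ?thesis using assms span_induct[of x S "\<lambda>x. mink u x = 0"] by auto
qed

lemma cauchy_schwarz_4:
  fixes a1 a2 a3 a4 b1 b2 b3 b4 :: real
  shows "(a1*b1 + a2*b2 + a3*b3 + a4*b4)^2 \<le> (a1^2 + a2^2 + a3^2 + a4^2) * (b1^2 + b2^2 + b3^2 + b4^2)"
proof -
  have "(a1^2 + a2^2 + a3^2 + a4^2) * (b1^2 + b2^2 + b3^2 + b4^2) - (a1*b1 + a2*b2 + a3*b3 + a4*b4)^2
      = (a1*b2 - a2*b1)^2 + (a1*b3 - a3*b1)^2 + (a1*b4 - a4*b1)^2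
        + (a2*b3 - a3*b2)^2 + (a2*b4 - a4*b2)^2 + (a3*b4 - a4*b3)^2"
    by algebra
  also have "\<dots> \<ge> 0" by simp
  finally show ?thesis by simp
qed

lemma mink_orthogonal_H4_pos:
  assumes p: "p \<in> H4" and pv: "mink p v = 0" and v: "v \<noteq> 0"
  shows "mink v v > 0"
proof -
  define P where "P = (p$1)^2 + (p$2)^2 + (p$3)^2 + (p$4)^2"
  define V where "V = (v$1)^2 + (v$2)^2 + (v$3)^2 + (v$4)^2"
  define Q where "Q = p$1 * v$1 + p$2 * v$2 + p$3 * v$3 + p$4 * v$4"
  have p0: "p$0 > 0" "(p$0)^2 = 1 + P"
    using p by (auto simp: H4_def mink_expand P_def power2_eq_square)
  have Q: "p$0 * v$0 = Q" using pv by (simp add: mink_expand Q_def)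
  have mv: "mink v v = V - (v$0)^2" by (simp add: mink_expand V_def power2_eq_square)
  have "Q^2 \<le> P * V" unfolding P_def V_def Q_def by (rule cauchy_schwarz_4)
  show ?thesis
  proof (cases "V = 0")
    case True
    then have "(v$1)^2 = 0" "(v$2)^2 = 0" "(v$3)^2 = 0" "(v$4)^2 = 0"
      unfolding V_def by (smt (verit) zero_le_power2)+
    then have "v$1 = 0" "v$2 = 0" "v$3 = 0" "v$4 = 0" by simp_all
    moreover from this have "v$0 = 0" using Q p0(1) by (simp add: Q_def)
    ultimately show ?thesis using v by (simp add: vec_eq_iff forall_5)
  next
    case False
    then have "V > 0" by (simp add: V_def add_pos_nonneg order_less_le)
    have "P \<ge> 0" by (simp add: P_def)
    have "(1 + P) * (v$0)^2 \<le> P * V"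
      using \<open>Q^2 \<le> P * V\<close> Q p0(2) by (metis power_mult_distrib)
    then have "(v$0)^2 \<le> P * (V - (v$0)^2)" by (simp add: algebra_simps)
    then have "(v$0)^2 < V"
      using \<open>V > 0\<close> \<open>P \<ge> 0\<close> by (smt (verit) mult_nonneg_nonpos)
    then show ?thesis using mv by simp
  qed
qed

lemma H4_scaleR_eq_1:
  assumes p: "p \<in> H4" and cp: "c *\<^sub>R p \<in> H4"
  shows "c = 1"
proof -
  have "c * c = 1" using p cp by (simp add: H4_def mink_simps)
  moreover have "c > 0" using p cp by (simp add: H4_def zero_less_mult_iff)
  ultimately show ?thesis by (auto simp: square_eq_1_iff)
qed

section \<open>Orientation-preserving isometries\<close>

lemma
  fixes A :: "'a::semiring_1^'n^'n"
  assumes "invertible A"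
  shows matrix_inv_right: "A ** matrix_inv A = mat 1"
    and matrix_inv_left: "matrix_inv A ** A = mat 1"
proof -
  have "\<exists>B. A ** B = mat 1 \<and> B ** A = mat 1" using assms by (simp add: invertible_def)
  then have "A ** matrix_inv A = mat 1 \<and> matrix_inv A ** A = mat 1"
    unfolding matrix_inv_def by (rule someI_ex)
  then show "A ** matrix_inv A = mat 1" "matrix_inv A ** A = mat 1" by auto
qed

lemma matrix_inv_matrix_inv:
  fixes A :: "'a::semiring_1^'n^'n"
  assumes A: "invertible A"
  shows "matrix_inv (matrix_inv A) = A"
proof -
  have "invertible (matrix_inv A)"
    unfolding invertible_def using matrix_inv_left[OF A] matrix_inv_right[OF A] by blast
  then have "matrix_inv (matrix_inv A) = matrix_inv (matrix_inv A) ** (matrix_inv A ** A)"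
    by (simp add: matrix_inv_left[OF A])
  also have "\<dots> = A" using \<open>invertible (matrix_inv A)\<close>
    by (simp add: matrix_mul_assoc matrix_inv_left)
  finally show ?thesis .
qed

lemma is_or_isom_invertible: "is_or_isom A \<Longrightarrow> invertible A"
  by (simp add: is_or_isom_def invertible_det_nz)

lemma is_or_isom_mink: "is_or_isom A \<Longrightarrow> mink (A *v x) (A *v y) = mink x y"
  by (simp add: is_or_isom_def)

lemma is_or_isom_mat_1: "is_or_isom (mat 1)"
  by (simp add: is_or_isom_def)

lemma is_or_isom_mult: "is_or_isom A \<Longrightarrow> is_or_isom B \<Longrightarrow> is_or_isom (A ** B)"
  by (simp add: is_or_isom_def matrix_vector_mul_assoc[symmetric] det_mul)

lemma is_or_isom_matrix_inv:
  assumes A: "is_or_isom A"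
  shows "is_or_isom (matrix_inv A)"
proof -
  let ?B = "matrix_inv A"
  have AB: "A *v (?B *v x) = x" for x
    by (simp add: matrix_vector_mul_assoc matrix_inv_right[OF is_or_isom_invertible[OF A]])
  have mink_B: "mink (?B *v x) (?B *v y) = mink x y" for x y
    using is_or_isom_mink[OF A] by (metis AB)
  have "det A * det ?B = 1"
    by (metis det_I det_mul matrix_inv_right[OF is_or_isom_invertible[OF A]])
  then have det_B: "det ?B > 0"
    using A by (metis is_or_isom_def zero_less_mult_pos zero_less_one)
  have "?B *v x \<in> H4" if x: "x \<in> H4" for x
  proof -
    define y where "y = ?B *v x"
    have y: "mink y y = -1" using mink_B[of x x] x by (simp add: y_def H4_def)
    have "y$0 \<noteq> 0"
    proof
      assume "y$0 = 0"
      then have "mink y y \<ge> 0" by (simp add: mink_expand)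
      then show False using y by simp
    qed
    moreover have "\<not> y$0 < 0"
    proof
      assume "y$0 < 0"
      then have "-y \<in> H4" using y by (simp add: H4_def mink_simps)
      moreover have "A *v (- y) = - x"
        using AB[of x] linear_neg[OF matrix_vector_mul_linear] by (metis y_def)
      ultimately have "- x \<in> H4" using A by (metis is_or_isom_def)
      then show False using x by (simp add: H4_def)
    qed
    ultimately show ?thesis using y by (auto simp: H4_def y_def)
  qed
  then show ?thesis unfolding is_or_isom_def using mink_B det_B by blast
qed

lemma is_or_isom_compo: "\<forall>k\<in>{1..n}. is_or_isom (\<tau> k) \<Longrightarrow> is_or_isom (compo \<tau> n)"
  by (induction n) (auto simp: is_or_isom_mat_1 intro: is_or_isom_mult)

lemma act_act: "act A (act B X) = act (A ** B) X"
  by (induction B X rule: act.induct) (simp_all add: matrix_vector_mul_assoc)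

lemma act_mat_1: "act (mat 1) X = X"
  by (induction "mat 1 :: mat5" X rule: act.induct) simp_all

lemma act_matrix_inv_act: "invertible A \<Longrightarrow> act (matrix_inv A) (act A X) = X"
  by (simp add: act_act matrix_inv_left act_mat_1)

section \<open>Orientations of ordered bases\<close>

lemma rows5_row_update:
  "rows5 x b c d e = (\<chi> i. if i = 0 then x else rows5 0 b c d e $ i)"
  "rows5 a x c d e = (\<chi> i. if i = 1 then x else rows5 a 0 c d e $ i)"
  "rows5 a b x d e = (\<chi> i. if i = 2 then x else rows5 a b 0 d e $ i)"
  "rows5 a b c d x = (\<chi> i. if i = 4 then x else rows5 a b c d 0 $ i)"
  by (simp_all add: rows5_def vec_eq_iff forall_5)

lemma det_rows5_add:
  "det (rows5 (x + y) b c d e) = det (rows5 x b c d e) + det (rows5 y b c d e)"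
  "det (rows5 a (x + y) c d e) = det (rows5 a x c d e) + det (rows5 a y c d e)"
  "det (rows5 a b (x + y) d e) = det (rows5 a b x d e) + det (rows5 a b y d e)"
  by (subst (1 2 3) rows5_row_update, rule det_row_add)+

lemma det_rows5_scale:
  "det (rows5 (k *\<^sub>R x) b c d e) = k * det (rows5 x b c d e)"
  "det (rows5 a (k *\<^sub>R x) c d e) = k * det (rows5 a x c d e)"
  "det (rows5 a b (k *\<^sub>R x) d e) = k * det (rows5 a b x d e)"
  "det (rows5 a b c d (k *\<^sub>R x)) = k * det (rows5 a b c d x)"
  by (subst (1 2) rows5_row_update, simp only: scalar_mult_eq_scaleR[symmetric], rule det_row_mul)+

lemma det_rows5_eq_rows:
  "det (rows5 x x c d e) = 0" "det (rows5 x b x d e) = 0" "det (rows5 a x x d e) = 0"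
  by (rule det_identical_rows[of 0 1] det_identical_rows[of 0 2] det_identical_rows[of 1 2];
      simp add: rows5_def row_def vec_eq_iff)+

lemma det_rows5_swap:
  "det (rows5 y x c d e) = - det (rows5 x y c d e)"
  "det (rows5 z b x d e) = - det (rows5 x b z d e)"
  "det (rows5 a z y d e) = - det (rows5 a y z d e)"
  using det_rows5_eq_rows(1)[of "x + y" c d e, unfolded det_rows5_add]
    det_rows5_eq_rows(2)[of "x + z" b d e, unfolded det_rows5_add]
    det_rows5_eq_rows(3)[of a "y + z" d e, unfolded det_rows5_add]
  by (simp_all add: det_rows5_eq_rows)

lemma det_rows5_lincomb2:
  "det (rows5 (a1 *\<^sub>R x + a2 *\<^sub>R y) (b1 *\<^sub>R x + b2 *\<^sub>R y) c d e)
     = (a1 * b2 - a2 * b1) * det (rows5 x y c d e)"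
  using det_rows5_swap(1)[of y x c d e]
  by (simp add: det_rows5_add det_rows5_scale det_rows5_eq_rows algebra_simps)

lemma det_rows5_lincomb3:
  "det (rows5 (a1 *\<^sub>R x + a2 *\<^sub>R y + a3 *\<^sub>R z) (b1 *\<^sub>R x + b2 *\<^sub>R y + b3 *\<^sub>R z)
       (c1 *\<^sub>R x + c2 *\<^sub>R y + c3 *\<^sub>R z) d e)
     = (a1 * (b2 * c3 - b3 * c2) - a2 * (b1 * c3 - b3 * c1) + a3 * (b1 * c2 - b2 * c1))
       * det (rows5 x y z d e)"
proof -
  have perm: "det (rows5 y x z d e) = - det (rows5 x y z d e)"
    "det (rows5 x z y d e) = - det (rows5 x y z d e)"
    "det (rows5 z y x d e) = - det (rows5 x y z d e)"
    "det (rows5 y z x d e) = det (rows5 x y z d e)"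
    "det (rows5 z x y d e) = det (rows5 x y z d e)"
    by (metis det_rows5_swap minus_minus)+
  show ?thesis
    by (simp add: det_rows5_add det_rows5_scale det_rows5_eq_rows perm algebra_simps)
qed

lemma span2E:
  assumes "u \<in> span {x, y}"
  obtains a b where "u = a *\<^sub>R x + b *\<^sub>R y"
  using assms by (auto simp: span_insert span_singleton) (metis diff_add_cancel add.commute)

lemma span3E:
  assumes "u \<in> span {x, y, z}"
  obtains a b c where "u = a *\<^sub>R x + b *\<^sub>R y + c *\<^sub>R z"
proof -
  obtain k where "u - k *\<^sub>R x \<in> span {y, z}" using assms by (auto simp: span_insert[of x])
  then obtain b c where "u - k *\<^sub>R x = b *\<^sub>R y + c *\<^sub>R z" by (rule span2E)
  then have "u = k *\<^sub>R x + b *\<^sub>R y + c *\<^sub>R z" by (simp add: algebra_simps)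
  then show ?thesis by (rule that)
qed

lemma det_rows5_span2_ratio:
  assumes "span {a', b'} = span {a, b}"
  obtains k where "\<And>w1 w2 w3. det (rows5 a' b' w1 w2 w3) = k * det (rows5 a b w1 w2 w3)"
proof -
  have "a' \<in> span {a, b}" "b' \<in> span {a, b}" using assms span_base[of _ "{a', b'}"] by auto
  then obtain a1 a2 b1 b2 where "a' = a1 *\<^sub>R a + a2 *\<^sub>R b" "b' = b1 *\<^sub>R a + b2 *\<^sub>R b"
    by (metis span2E)
  then show ?thesis by (intro that[of "a1 * b2 - a2 * b1"]) (simp add: det_rows5_lincomb2)
qed

lemma det_rows5_span3_ratio:
  assumes "span {a', b', c'} = span {a, b, c}"
  obtains k where "\<And>w1 w2. det (rows5 a' b' c' w1 w2) = k * det (rows5 a b c w1 w2)"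
proof -
  have "a' \<in> span {a, b, c}" "b' \<in> span {a, b, c}" "c' \<in> span {a, b, c}"
    using assms span_base[of _ "{a', b', c'}"] by auto
  then obtain a1 a2 a3 b1 b2 b3 c1 c2 c3 where "a' = a1 *\<^sub>R a + a2 *\<^sub>R b + a3 *\<^sub>R c"
     "b' = b1 *\<^sub>R a + b2 *\<^sub>R b + b3 *\<^sub>R c" "c' = c1 *\<^sub>R a + c2 *\<^sub>R b + c3 *\<^sub>R c"
    by (metis span3E)
  then show ?thesis
    by (intro that[of "a1 * (b2 * c3 - b3 * c2) - a2 * (b1 * c3 - b3 * c1) + a3 * (b1 * c2 - b2 * c1)"])
      (simp only: det_rows5_lincomb3)
qed

lemma proportional_same_sign_trans:
  fixes f1 f2 f3 :: "'a \<Rightarrow> real"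
  assumes "\<And>w. f2 w = k * f1 w" "\<And>w. f3 w = k' * f2 w"
    and "f1 w * f2 w > 0" "f2 v * f3 v > 0"
  shows "f1 w * f3 w > 0"
proof -
  have "k * (f1 w)^2 > 0" using assms(1,3) by (simp add: power2_eq_square algebra_simps)
  moreover have "k' * (f2 v)^2 > 0" using assms(2,4) by (simp add: power2_eq_square algebra_simps)
  ultimately have "k > 0" "k' > 0" "f1 w \<noteq> 0" by (auto simp: zero_less_mult_iff)
  moreover have "f1 w * f3 w = (k' * k) * (f1 w)^2"
    using assms(1,2) by (simp add: power2_eq_square algebra_simps)
  ultimately show ?thesis by simp
qed

lemma same_oline_sym: "same_oline L L' \<Longrightarrow> same_oline L' L"
  unfolding same_oline_def by (auto simp: mult.commute)

lemma same_oline_trans: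
  assumes "same_oline L1 L2" "same_oline L2 L3"
  shows "same_oline L1 L3"
proof -
  obtain a1 b1 a2 b2 a3 b3 where L: "L1 = (a1, b1)" "L2 = (a2, b2)" "L3 = (a3, b3)"
    by (metis prod.exhaust)
  let ?f = "\<lambda>a b (w1, w2, w3). det (rows5 a b w1 w2 w3)"
  have "span {a2, b2} = span {a1, b1}" "span {a3, b3} = span {a2, b2}"
    using assms by (auto simp: same_oline_def lspan_def L)
  then obtain k k' where "\<And>w. ?f a2 b2 w = k * ?f a1 b1 w" "\<And>w. ?f a3 b3 w = k' * ?f a2 b2 w"
    by (metis (no_types, lifting) case_prod_conv det_rows5_span2_ratio prod_cases3)
  moreover obtain w v where "?f a1 b1 w * ?f a2 b2 w > 0" "?f a2 b2 v * ?f a3 b3 v > 0"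
    using assms by (auto simp: same_oline_def L)
  ultimately have "?f a1 b1 w * ?f a3 b3 w > 0" by (rule proportional_same_sign_trans)
  then show ?thesis using assms by (auto simp: same_oline_def lspan_def L split: prod.splits)
qed

lemma same_oplane_sym: "same_oplane P P' \<Longrightarrow> same_oplane P' P"
  unfolding same_oplane_def by (auto simp: mult.commute split: prod.splits)

lemma same_oplane_trans:
  assumes "same_oplane P1 P2" "same_oplane P2 P3"
  shows "same_oplane P1 P3"
proof -
  obtain a1 b1 c1 a2 b2 c2 a3 b3 c3 where P: "P1 = (a1, b1, c1)" "P2 = (a2, b2, c2)" "P3 = (a3, b3, c3)"
    by (metis prod.exhaust)
  let ?f = "\<lambda>a b c (w1, w2). det (rows5 a b c w1 w2)"
  have "span {a2, b2, c2} = span {a1, b1, c1}" "span {a3, b3, c3} = span {a2, b2, c2}"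
    using assms by (auto simp: same_oplane_def pspan_def P)
  then obtain k k' where "\<And>w. ?f a2 b2 c2 w = k * ?f a1 b1 c1 w" "\<And>w. ?f a3 b3 c3 w = k' * ?f a2 b2 c2 w"
    by (metis (no_types, lifting) case_prod_conv det_rows5_span3_ratio prod.exhaust)
  moreover obtain w v where "?f a1 b1 c1 w * ?f a2 b2 c2 w > 0" "?f a2 b2 c2 v * ?f a3 b3 c3 v > 0"
    using assms by (auto simp: same_oplane_def P)
  ultimately have "?f a1 b1 c1 w * ?f a3 b3 c3 w > 0" by (rule proportional_same_sign_trans)
  then show ?thesis using assms by (auto simp: same_oplane_def pspan_def P split: prod.splits)
qed

lemma heq_sym: "heq X Y \<Longrightarrow> heq Y X"
  by (cases X; cases Y) (auto intro: same_oline_sym same_oplane_sym)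

lemma heq_trans: "heq X Y \<Longrightarrow> heq Y Z \<Longrightarrow> heq X Z"
  by (cases X; cases Y; cases Z) (auto intro: same_oline_trans same_oplane_trans)

lemma rows5_act:
  "rows5 (A *v a) (A *v b) (A *v c) (A *v d) (A *v e) = rows5 a b c d e ** transpose A"
  by (simp add: rows5_def vec_eq_iff forall_5 matrix_matrix_mult_def matrix_vector_mult_def
      transpose_def mult.commute)

lemma det_rows5_act:
  "det (rows5 (A *v a) (A *v b) (A *v c) (A *v d) (A *v e)) = det (rows5 a b c d e) * det A"
  by (simp add: rows5_act det_mul)

lemma span_matrix_image: "span ((*v) A ` S) = (*v) A ` span S" for A :: "real^'n^'m"
  by (rule span_linear_image) (rule matrix_vector_mul_linear)

lemma dim_matrix_image:
  fixes A :: "real^'n^'n"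
  assumes "invertible A"
  shows "dim ((*v) A ` S) = dim S"
proof -
  have "(*v) (matrix_inv A) ` ((*v) A ` S) = S"
    by (force simp: image_iff matrix_vector_mul_assoc matrix_inv_left[OF assms])
  then show ?thesis
    using dim_image_le[of "(*v) A" S] dim_image_le[of "(*v) (matrix_inv A)" "(*v) A ` S"]
    by (simp add: matrix_vector_mul_linear)
qed

lemma is_oline_act:
  assumes A: "is_or_isom A" and L: "is_oline (a, b)"
  shows "is_oline (A *v a, A *v b)"
proof -
  obtain x where "x \<in> span {a, b}" "x \<in> H4" using L by (auto simp: is_oline_def lspan_def)
  then have "A *v x \<in> span {A *v a, A *v b}" "A *v x \<in> H4"
    using span_matrix_image[of A "{a, b}"] A by (auto simp: is_or_isom_def)
  then show ?thesis
    using L dim_matrix_image[OF is_or_isom_invertible[OF A], of "{a, b}"]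
    by (auto simp: is_oline_def lspan_def)
qed

lemma is_oplane_act:
  assumes A: "is_or_isom A" and P: "is_oplane (a, b, c)"
  shows "is_oplane (A *v a, A *v b, A *v c)"
proof -
  obtain x where "x \<in> span {a, b, c}" "x \<in> H4" using P by (auto simp: is_oplane_def pspan_def)
  then have "A *v x \<in> span {A *v a, A *v b, A *v c}" "A *v x \<in> H4"
    using span_matrix_image[of A "{a, b, c}"] A by (auto simp: is_or_isom_def)
  then show ?thesis
    using P dim_matrix_image[OF is_or_isom_invertible[OF A], of "{a, b, c}"]
    by (auto simp: is_oplane_def pspan_def)
qed

lemma same_oline_act:
  assumes A: "is_or_isom A" and S: "same_oline (a, b) (a', b')"
  shows "same_oline (A *v a, A *v b) (A *v a', A *v b')"
proof -
  obtain w1 w2 w3 where "det (rows5 a b w1 w2 w3) * det (rows5 a' b' w1 w2 w3) > 0"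
    using S by (auto simp: same_oline_def)
  then have "det (rows5 (A *v a) (A *v b) (A *v w1) (A *v w2) (A *v w3))
      * det (rows5 (A *v a') (A *v b') (A *v w1) (A *v w2) (A *v w3)) > 0"
    using A by (simp add: det_rows5_act is_or_isom_def mult_pos_pos algebra_simps)
  moreover have "span {A *v a, A *v b} = span {A *v a', A *v b'}"
    using span_matrix_image[of A "{a, b}"] span_matrix_image[of A "{a', b'}"] S
    by (simp add: same_oline_def lspan_def)
  ultimately show ?thesis using S is_oline_act[OF A] by (auto simp: same_oline_def lspan_def)
qed

lemma same_oplane_act:
  assumes A: "is_or_isom A" and S: "same_oplane (a, b, c) (a', b', c')"
  shows "same_oplane (A *v a, A *v b, A *v c) (A *v a', A *v b', A *v c')"
proof -
  obtain w1 w2 where "det (rows5 a b c w1 w2) * det (rows5 a' b' c' w1 w2) > 0"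
    using S by (auto simp: same_oplane_def)
  then have "det (rows5 (A *v a) (A *v b) (A *v c) (A *v w1) (A *v w2))
      * det (rows5 (A *v a') (A *v b') (A *v c') (A *v w1) (A *v w2)) > 0"
    using A by (simp add: det_rows5_act is_or_isom_def mult_pos_pos algebra_simps)
  moreover have "span {A *v a, A *v b, A *v c} = span {A *v a', A *v b', A *v c'}"
    using span_matrix_image[of A "{a, b, c}"] span_matrix_image[of A "{a', b', c'}"] S
    by (simp add: same_oplane_def pspan_def)
  ultimately show ?thesis using S is_oplane_act[OF A] by (auto simp: same_oplane_def pspan_def)
qed

lemma heq_act:
  assumes A: "is_or_isom A" and h: "heq X Y"
  shows "heq (act A X) (act A Y)"
  using h same_oline_act[OF A] same_oplane_act[OF A]
  by (induction X Y rule: heq.induct) (auto split: prod.splits)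

lemma heq_act_matrix_inv:
  assumes A: "is_or_isom A" and h: "heq (act A X) Y"
  shows "heq (act (matrix_inv A) Y) X"
  using heq_act[OF is_or_isom_matrix_inv[OF A] h] heq_sym
  by (simp add: act_matrix_inv_act is_or_isom_invertible[OF A])

lemma heq_act_mult:
  assumes A: "is_or_isom A" and "heq (act B X) Y" "heq (act A Y) Z"
  shows "heq (act (A ** B) X) Z"
  using heq_act[OF A assms(2)] assms(3) heq_trans by (metis act_act)

section \<open>Minkowski-orthogonal families\<close>

definition mink_orthogonal :: "vec set \<Rightarrow> bool" where
  "mink_orthogonal B \<longleftrightarrow> finite B \<and> (\<forall>x\<in>B. mink x x \<noteq> 0 \<and> (\<forall>y\<in>B. y \<noteq> x \<longrightarrow> mink x y = 0))"

lemma mink_orthogonal_nonnull: "mink_orthogonal B \<Longrightarrow> x \<in> B \<Longrightarrow> mink x x \<noteq> 0"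
  and mink_orthogonal_orth: "mink_orthogonal B \<Longrightarrow> x \<in> B \<Longrightarrow> y \<in> B \<Longrightarrow> x \<noteq> y \<Longrightarrow> mink x y = 0"
  by (auto simp: mink_orthogonal_def)

lemma mink_orthogonal_subset: "B \<subseteq> B' \<Longrightarrow> mink_orthogonal B' \<Longrightarrow> mink_orthogonal B"
  by (auto simp: mink_orthogonal_def finite_subset)

lemma mink_orthogonal_insert:
  assumes "mink_orthogonal B" "mink x x \<noteq> 0" "\<forall>b\<in>B. mink b x = 0"
  shows "mink_orthogonal (insert x B)" "x \<notin> B"
proof -
  have "\<forall>b\<in>B. mink x b = 0" using assms(3) mink_sym by metis
  then show "mink_orthogonal (insert x B)" "x \<notin> B"
    using assms by (auto simp: mink_orthogonal_def)
qed

lemma mink_orthogonal_sum_coeff: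
  assumes B: "mink_orthogonal B" and b: "b \<in> B"
  shows "mink b (\<Sum>v\<in>B. c v *\<^sub>R v) = c b * mink b b"
proof -
  have "mink b (\<Sum>v\<in>B. c v *\<^sub>R v) = (\<Sum>v\<in>B. c v * mink b v)"
    by (simp add: mink_sum_right mink_scale_right)
  also have "\<dots> = c b * mink b b"
    using B b by (subst sum.remove[of B b]) (auto simp: mink_orthogonal_def intro: sum.neutral)
  finally show ?thesis .
qed

lemma mink_orthogonal_independent:
  assumes B: "mink_orthogonal B"
  shows "independent B"
  unfolding independent_explicit
proof (intro conjI allI impI ballI)
  show "finite B" using B by (simp add: mink_orthogonal_def)
  fix c v assume "(\<Sum>v\<in>B. c v *\<^sub>R v) = 0" "v \<in> B"
  then have "c v * mink v v = 0" using mink_orthogonal_sum_coeff[OF B] by (metis mink_zero_right)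
  then show "c v = 0" using B \<open>v \<in> B\<close> by (simp add: mink_orthogonal_def)
qed

lemma mink_orthogonal_dim: "mink_orthogonal B \<Longrightarrow> dim B = card B"
  by (simp add: dim_eq_card_independent mink_orthogonal_independent)

lemma exists_not_in_span:
  assumes "finite B" "card B < dim S"
  obtains y where "y \<in> S" "y \<notin> span B"
proof -
  have "\<not> S \<subseteq> span B" using dim_le_card[of S B] assms by linarith
  then show ?thesis using that by blast
qed

lemma span_eq_if_subset_dim_le:
  "span A \<subseteq> span B \<Longrightarrow> dim B \<le> dim A \<Longrightarrow> span A = span B" for A B :: "'a::euclidean_space set"
  by (rule subspace_dim_equal) simp_all

text \<open>Gram--Schmidt step. The new vector is orthogonal to the time-like \<open>p\<close>, hence space-like
  and in particular non-null.\<close>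
lemma mink_orthogonal_extend:
  assumes B: "mink_orthogonal B" and p: "p \<in> B" "p \<in> H4" and y: "y \<notin> span B"
  obtains w where "mink_orthogonal (insert w B)" "w \<notin> B" "\<forall>b\<in>B. mink b w = 0"
    "w \<in> span (insert y B)"
proof -
  define s where "s = (\<Sum>b\<in>B. (mink b y / mink b b) *\<^sub>R b)"
  have s: "s \<in> span B" unfolding s_def by (intro span_sum span_scale span_base)
  have orth: "\<forall>b\<in>B. mink b (y - s) = 0"
    using B mink_orthogonal_sum_coeff[OF B] by (auto simp: s_def mink_diff_right mink_orthogonal_def)
  have "y - s \<noteq> 0" using s y by auto
  then have "mink (y - s) (y - s) \<noteq> 0"
    using mink_orthogonal_H4_pos[OF p(2)] orth p(1) by (metis less_irrefl)
  moreover have "span B \<subseteq> span (insert y B)" by (rule span_mono) auto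
  then have "y - s \<in> span (insert y B)" using s by (auto intro: span_diff span_base)
  ultimately show ?thesis using that mink_orthogonal_insert[OF B _ orth] orth by blast
qed

lemma orth_flag_adapted_basis:
  assumes L: "is_oline (a, b)" and P: "is_oplane (c, d, e)"
    and LP: "lspan (a, b) \<subseteq> pspan (c, d, e)" and O: "orth_lf L' (a, b) (c, d, e)"
  obtains p v w u z where "p \<in> H4" "mink_orthogonal {p, v, w, u, z}" "distinct [p, v, w, u, z]"
    "span {p, v} = lspan (a, b)" "span {p, v, w} = pspan (c, d, e)" "span {p, u} = lspan L'"
proof -
  obtain p u where p: "p \<in> H4" "p \<in> lspan (a, b)" and u: "u \<noteq> 0" "mink p u = 0"
    and L': "lspan L' = span {p, u}" and uP: "\<forall>x\<in>pspan (c, d, e). mink u x = 0"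
    using O by (auto simp: orth_lf_def)
  have B1: "mink_orthogonal {p}" using p(1) by (simp add: mink_orthogonal_def H4_def)
  obtain y1 where "y1 \<in> {a, b}" "y1 \<notin> span {p}"
    using exists_not_in_span[of "{p}" "{a, b}"] L by (auto simp: is_oline_def)
  then obtain v where B2: "mink_orthogonal {v, p}" "v \<notin> {p}" and v: "v \<in> span {y1, p}"
    using mink_orthogonal_extend[OF B1 _ p(1)] by blast
  have "span {y1, p} \<subseteq> lspan (a, b)"
    unfolding lspan_def using \<open>y1 \<in> {a, b}\<close> p(2)
    by (intro span_minimal) (auto simp: lspan_def intro: span_base)
  then have "span {v, p} \<subseteq> lspan (a, b)"
    using v p(2) unfolding lspan_def by (intro span_minimal) (auto simp: lspan_def)
  moreover have "dim {v, p} = 2" using mink_orthogonal_dim[OF B2(1)] B2(2) by simp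
  moreover have "dim {a, b} = 2" using L by (simp add: is_oline_def)
  ultimately have spL: "span {v, p} = lspan (a, b)"
    unfolding lspan_def by (intro span_eq_if_subset_dim_le) simp_all
  obtain y2 where "y2 \<in> {c, d, e}" "y2 \<notin> span {v, p}"
    using exists_not_in_span[of "{v, p}" "{c, d, e}"] P B2(2) by (auto simp: is_oplane_def)
  then obtain w where B3: "mink_orthogonal {w, v, p}" "w \<notin> {v, p}" and w: "w \<in> span {y2, v, p}"
    using mink_orthogonal_extend[OF B2(1) _ p(1)] by blast
  have vp: "v \<in> pspan (c, d, e)" "p \<in> pspan (c, d, e)"
    using spL LP p(2) span_base[of v "{v, p}"] by auto
  then have "span {y2, v, p} \<subseteq> pspan (c, d, e)"
    unfolding pspan_def using \<open>y2 \<in> {c, d, e}\<close>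
    by (intro span_minimal) (auto simp: pspan_def intro: span_base)
  then have "span {w, v, p} \<subseteq> pspan (c, d, e)"
    using w vp unfolding pspan_def by (intro span_minimal) (auto simp: pspan_def)
  moreover have "dim {w, v, p} = 3" using mink_orthogonal_dim[OF B3(1)] B2(2) B3(2) by simp
  moreover have "dim {c, d, e} = 3" using P by (simp add: is_oplane_def)
  ultimately have spP: "span {w, v, p} = pspan (c, d, e)"
    unfolding pspan_def prod.case by (intro span_eq_if_subset_dim_le) simp_all
  have "{w, v, p} \<subseteq> pspan (c, d, e)" using spP span_superset[of "{w, v, p}"] by simp
  then have "\<forall>x\<in>{w, v, p}. mink x u = 0" using uP by (auto simp: mink_sym[of _ u])
  moreover have "mink u u \<noteq> 0" using mink_orthogonal_H4_pos[OF p(1) u(2) u(1)] by simp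
  ultimately have B4: "mink_orthogonal {u, w, v, p}" "u \<notin> {w, v, p}"
    using mink_orthogonal_insert[OF B3(1)] by blast+
  obtain y3 where "y3 \<notin> span {u, w, v, p}"
    using exists_not_in_span[of "{u, w, v, p}" UNIV] B2(2) B3(2) B4(2) by auto
  then obtain z where B5: "mink_orthogonal {z, u, w, v, p}" "z \<notin> {u, w, v, p}"
    using mink_orthogonal_extend[OF B4(1) _ p(1)] by blast
  show ?thesis
  proof (rule that[of p v w u z])
    show "mink_orthogonal {p, v, w, u, z}" using B5(1) by (simp add: insert_commute)
    show "distinct [p, v, w, u, z]" using B2(2) B3(2) B4(2) B5(2) by auto
    show "span {p, v} = lspan (a, b)" using spL by (simp add: insert_commute)
    show "span {p, v, w} = pspan (c, d, e)" using spP by (simp add: insert_commute)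
  qed (use p(1) L' in auto)
qed

section \<open>Rigidity\<close>

lemma is_or_isom_eigenvector:
  assumes C: "is_or_isom C" and B: "mink_orthogonal (insert x B)" "x \<notin> B"
    and fixB: "\<forall>b\<in>B. C *v b = b" and Cx: "C *v x \<in> span (insert x B)"
  obtains t where "C *v x = t *\<^sub>R x"
proof -
  have fin: "finite B" using B(1) by (simp add: mink_orthogonal_def)
  obtain c where c: "C *v x = (\<Sum>v\<in>insert x B. c v *\<^sub>R v)"
    using Cx span_finite[of "insert x B"] fin by auto
  have "c b = 0" if b: "b \<in> B" for b
  proof -
    have "c b * mink b b = mink (C *v b) (C *v x)"
      using mink_orthogonal_sum_coeff[OF B(1)] b fixB c by simp
    also have "\<dots> = 0"
      using is_or_isom_mink[OF C] mink_orthogonal_orth[OF B(1)] b B(2) by auto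
    finally show ?thesis using mink_orthogonal_nonnull[OF B(1)] b by simp
  qed
  then have "C *v x = c x *\<^sub>R x" using c fin B(2) by simp
  then show ?thesis by (rule that)
qed

lemma is_or_isom_eigenvalue_eq_1:
  assumes C: "is_or_isom C" and "C *v x = t *\<^sub>R x" "mink x x \<noteq> 0" "t > 0"
  shows "t = 1"
proof -
  have "(t * t) * mink x x = 1 * mink x x"
    using is_or_isom_mink[OF C, of x x] assms(2) by (simp add: mink_simps)
  then show ?thesis using assms(3,4) by (auto simp: square_eq_1_iff)
qed

lemma pos_if_mult_square_pos: "0 < t * m * m \<Longrightarrow> 0 < (t::real)"
  by (metis mult.assoc mult_nonpos_nonneg not_le zero_le_square)

lemma same_oline_eigenvalue_pos:
  assumes h: "same_oline (C *v a, C *v b) (a, b)" and sp: "lspan (a, b) = span {p, x}"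
    and Cp: "C *v p = p" and Cx: "C *v x = t *\<^sub>R x"
  shows "t > 0"
proof -
  have "a \<in> span {p, x}" "b \<in> span {p, x}" using sp span_base[of _ "{a, b}"] by (auto simp: lspan_def)
  then obtain a1 a2 b1 b2 where ab: "a = a1 *\<^sub>R p + a2 *\<^sub>R x" "b = b1 *\<^sub>R p + b2 *\<^sub>R x"
    by (metis span2E)
  have Cab: "C *v a = a1 *\<^sub>R p + (a2 * t) *\<^sub>R x" "C *v b = b1 *\<^sub>R p + (b2 * t) *\<^sub>R x"
    using Cp Cx by (simp_all add: ab matrix_vector_right_distrib matrix_vector_mult_scaleR)
  obtain w1 w2 w3 where "det (rows5 (C *v a) (C *v b) w1 w2 w3) * det (rows5 a b w1 w2 w3) > 0"
    using h by (auto simp: same_oline_def)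
  also have "det (rows5 (C *v a) (C *v b) w1 w2 w3) = t * ((a1 * b2 - a2 * b1) * det (rows5 p x w1 w2 w3))"
    by (simp only: Cab det_rows5_lincomb2) (simp add: algebra_simps)
  also have "det (rows5 a b w1 w2 w3) = (a1 * b2 - a2 * b1) * det (rows5 p x w1 w2 w3)"
    by (simp only: ab det_rows5_lincomb2)
  finally show ?thesis by (rule pos_if_mult_square_pos)
qed

lemma same_oplane_eigenvalue_pos:
  assumes h: "same_oplane (C *v c, C *v d, C *v e) (c, d, e)" and sp: "pspan (c, d, e) = span {p, v, x}"
    and Cp: "C *v p = p" and Cv: "C *v v = v" and Cx: "C *v x = t *\<^sub>R x"
  shows "t > 0"
proof -
  have "c \<in> span {p, v, x}" "d \<in> span {p, v, x}" "e \<in> span {p, v, x}"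
    using sp span_base[of _ "{c, d, e}"] by (auto simp: pspan_def)
  then obtain c1 c2 c3 d1 d2 d3 e1 e2 e3 where cde: "c = c1 *\<^sub>R p + c2 *\<^sub>R v + c3 *\<^sub>R x"
    "d = d1 *\<^sub>R p + d2 *\<^sub>R v + d3 *\<^sub>R x" "e = e1 *\<^sub>R p + e2 *\<^sub>R v + e3 *\<^sub>R x"
    by (metis span3E)
  have Ccde: "C *v c = c1 *\<^sub>R p + c2 *\<^sub>R v + (c3 * t) *\<^sub>R x"
    "C *v d = d1 *\<^sub>R p + d2 *\<^sub>R v + (d3 * t) *\<^sub>R x" "C *v e = e1 *\<^sub>R p + e2 *\<^sub>R v + (e3 * t) *\<^sub>R x"
    using Cp Cv Cx by (simp_all add: cde matrix_vector_right_distrib matrix_vector_mult_scaleR)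
  obtain w1 w2 where "det (rows5 (C *v c) (C *v d) (C *v e) w1 w2) * det (rows5 c d e w1 w2) > 0"
    using h by (auto simp: same_oplane_def)
  also have "det (rows5 (C *v c) (C *v d) (C *v e) w1 w2)
      = t * ((c1 * (d2 * e3 - d3 * e2) - c2 * (d1 * e3 - d3 * e1) + c3 * (d1 * e2 - d2 * e1))
             * det (rows5 p v x w1 w2))"
    by (simp only: Ccde det_rows5_lincomb3) (simp add: algebra_simps)
  also have "det (rows5 c d e w1 w2)
      = (c1 * (d2 * e3 - d3 * e2) - c2 * (d1 * e3 - d3 * e1) + c3 * (d1 * e2 - d2 * e1))
        * det (rows5 p v x w1 w2)"
    by (simp only: cde det_rows5_lincomb3)
  finally show ?thesis by (rule pos_if_mult_square_pos)
qed

lemma rows_rows5: "rows (rows5 a b c d e) = {a, b, c, d, e}"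
proof -
  have "rows (rows5 a b c d e) = (\<lambda>i. rows5 a b c d e $ i) ` UNIV"
    by (simp add: rows_def row_def vec_lambda_eta full_SetCompr_eq)
  then show ?thesis unfolding UNIV_5 by (auto simp: rows5_def)
qed

lemma det_rows5_neq_0: "dim {a, b, c, d, e} = 5 \<Longrightarrow> det (rows5 a b c d e) \<noteq> 0"
  by (simp add: det_eq_0_rank row_rank_def rows_rows5)

lemma det_eq_eigenvalue_of_fixed_hyperplane:
  fixes C :: mat5
  assumes "dim {p, v, w, u, z} = 5" and "C *v p = p" "C *v v = v" "C *v w = w" "C *v u = u"
    and "C *v z = t *\<^sub>R z"
  shows "det C = t"
proof -
  have "t * det (rows5 p v w u z) = det (rows5 p v w u z) * det C"
    using det_rows5_act[of C p v w u z] assms(2-6) by (simp add: det_rows5_scale(4))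
  then show ?thesis using det_rows5_neq_0[OF assms(1)] by simp
qed

lemma mat_1_if_fixes_spanning_set:
  fixes C :: "real^'n^'n"
  assumes "span S = UNIV" "\<forall>x\<in>S. C *v x = x"
  shows "C = mat 1"
  unfolding matrix_eq
  using linear_eq_on_span[OF matrix_vector_mul_linear linear_id, of S] assms by simp

lemma same_oline_maps_lspan:
  "same_oline (C *v a, C *v b) (a, b) \<Longrightarrow> x \<in> lspan (a, b) \<Longrightarrow> C *v x \<in> lspan (a, b)"
  using span_matrix_image[of C "{a, b}"] by (auto simp: same_oline_def lspan_def)

lemma same_oplane_maps_pspan:
  "same_oplane (C *v a, C *v b, C *v c) (a, b, c) \<Longrightarrow> x \<in> pspan (a, b, c) \<Longrightarrow> C *v x \<in> pspan (a, b, c)"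
  using span_matrix_image[of C "{a, b, c}"] by (auto simp: same_oplane_def pspan_def)

lemma is_or_isom_fixing_orth_flag_eq_mat_1:
  assumes C: "is_or_isom C"
    and L: "is_oline (a, b)" and P: "is_oplane (c, d, e)" and LP: "lspan (a, b) \<subseteq> pspan (c, d, e)"
    and O: "orth_lf (a', b') (a, b) (c, d, e)"
    and hL': "same_oline (C *v a', C *v b') (a', b')"
    and hL: "same_oline (C *v a, C *v b) (a, b)"
    and hP: "same_oplane (C *v c, C *v d, C *v e) (c, d, e)"
  shows "C = mat 1"
proof -
  obtain p v w u z where p: "p \<in> H4" and B: "mink_orthogonal {p, v, w, u, z}"
    and dist: "distinct [p, v, w, u, z]" and spL: "span {p, v} = lspan (a, b)"
    and spP: "span {p, v, w} = pspan (c, d, e)" and spL': "span {p, u} = lspan (a', b')"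
    using orth_flag_adapted_basis[OF L P LP O] by blast
  have B': "mink_orthogonal S" if "S \<subseteq> {p, v, w, u, z}" for S
    using mink_orthogonal_subset[OF that B] .
  have nonnull: "mink x x \<noteq> 0" if "x \<in> {p, v, w, u, z}" for x
    using mink_orthogonal_nonnull[OF B that] .
  have Cp: "C *v p = p"
  proof -
    have "C *v p \<in> span {p, u}"
      using same_oline_maps_lspan[OF hL', of p] spL' span_base[of p "{p, u}"] by simp
    then obtain \<alpha> \<beta> where Cp: "C *v p = \<alpha> *\<^sub>R p + \<beta> *\<^sub>R u" by (rule span2E)
    have "C *v p \<in> span {p, v}"
      using same_oline_maps_lspan[OF hL, of p] spL span_base[of p "{p, v}"] by simp
    then have "mink u (C *v p) = 0"
      using mink_orthogonal_orth[OF B] dist by (intro mink_span_eq_0) auto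
    moreover have "mink u p = 0" using mink_orthogonal_orth[OF B, of u p] dist by auto
    ultimately have "\<beta> * mink u u = 0" by (simp add: Cp mink_simps)
    then have "C *v p = \<alpha> *\<^sub>R p" using nonnull Cp by simp
    moreover have "C *v p \<in> H4" using C p by (simp add: is_or_isom_def)
    ultimately show ?thesis using H4_scaleR_eq_1[OF p, of \<alpha>] by simp
  qed
  have Cu: "C *v u = u"
  proof -
    have "C *v u \<in> span {u, p}"
      using same_oline_maps_lspan[OF hL', of u] spL' span_base[of u "{p, u}"] by (simp add: insert_commute)
    then obtain t where t: "C *v u = t *\<^sub>R u"
      using is_or_isom_eigenvector[OF C B'[of "{u, p}"], of thesis] dist Cp by auto
    moreover have "t > 0" using same_oline_eigenvalue_pos[OF hL' spL'[symmetric] Cp t] .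
    ultimately show ?thesis using is_or_isom_eigenvalue_eq_1[OF C t] nonnull by simp
  qed
  have Cv: "C *v v = v"
  proof -
    have "C *v v \<in> span {v, p}"
      using same_oline_maps_lspan[OF hL, of v] spL span_base[of v "{p, v}"] by (simp add: insert_commute)
    then obtain t where t: "C *v v = t *\<^sub>R v"
      using is_or_isom_eigenvector[OF C B'[of "{v, p}"], of thesis] dist Cp by auto
    moreover have "t > 0" using same_oline_eigenvalue_pos[OF hL spL[symmetric] Cp t] .
    ultimately show ?thesis using is_or_isom_eigenvalue_eq_1[OF C t] nonnull by simp
  qed
  have Cw: "C *v w = w"
  proof -
    have "C *v w \<in> span {w, v, p}"
      using same_oplane_maps_pspan[OF hP, of w] spP span_base[of w "{p, v, w}"]
      by (simp add: insert_commute)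
    then obtain t where t: "C *v w = t *\<^sub>R w"
      using is_or_isom_eigenvector[OF C B'[of "{w, v, p}"], of thesis] dist Cp Cv by auto
    moreover have "t > 0" using same_oplane_eigenvalue_pos[OF hP spP[symmetric] Cp Cv t] .
    ultimately show ?thesis using is_or_isom_eigenvalue_eq_1[OF C t] nonnull by simp
  qed
  have "dim {p, v, w, u, z} = 5" using mink_orthogonal_dim[OF B] dist by simp
  then have spanning: "span {p, v, w, u, z} = UNIV" using dim_eq_full[of "{p, v, w, u, z}"] by simp
  have Cz: "C *v z = z"
  proof -
    have "C *v z \<in> span {z, u, w, v, p}" using spanning by (simp add: insert_commute)
    then obtain t where t: "C *v z = t *\<^sub>R z"
      using is_or_isom_eigenvector[OF C B'[of "{z, u, w, v, p}"], of thesis] dist Cp Cv Cw Cu by auto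
    moreover have "det C = t"
      using det_eq_eigenvalue_of_fixed_hyperplane[OF \<open>dim {p, v, w, u, z} = 5\<close> Cp Cv Cw Cu t] .
    then have "t > 0" using C by (simp add: is_or_isom_def)
    ultimately show ?thesis using is_or_isom_eigenvalue_eq_1[OF C t] nonnull by simp
  qed
  show ?thesis using mat_1_if_fixes_spanning_set[OF spanning] Cp Cv Cw Cu Cz by simp
qed

lemma is_or_isom_fixing_orth_pair_eq_mat_1:
  assumes C: "is_or_isom C" and X: "wf_hobj X" and Y: "wf_hobj Y" and XY: "orth X Y"
    and hX: "heq (act C X) X" and hY: "heq (act C Y) Y"
  shows "C = mat 1"
proof -
  have flag: "C = mat 1"
    if "wf_hobj (HLine L')" "wf_hobj (HFlag L P)" "orth_lf L' L P"
       "heq (act C (HLine L')) (HLine L')" "heq (act C (HFlag L P)) (HFlag L P)" for L' L P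
  proof -
    obtain a' b' a b c d e where "L' = (a', b')" "L = (a, b)" "P = (c, d, e)"
      by (metis prod.exhaust)
    then show ?thesis
      using that by (intro is_or_isom_fixing_orth_flag_eq_mat_1[OF C, of a b c d e a' b']) auto
  qed
  show ?thesis
    using X Y XY hX hY
    by (cases X; cases Y) (auto intro: flag)
qed

section \<open>The hexagon\<close>

lemma compo_transports_ends:
  assumes tau: "\<forall>n\<in>{1..6}. is_or_isom (\<tau> n) \<and> heq (act (\<tau> n) (S n)) (S n) \<and>
                 heq (act (\<tau> n) (S (prv n))) (S (nxt n))"
    and n: "1 \<le> n" "n \<le> 6"
  shows "heq (act (compo \<tau> n) (S 6)) (S (if odd n then nxt n else n)) \<and>
         heq (act (compo \<tau> n) (S 1)) (S (if odd n then n else nxt n))"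
  using n
proof (induction n rule: nat_induct_at_least)
  case base
  have "prv 1 = 6" by (simp add: prv_def)
  then have "heq (act (\<tau> 1) (S 6)) (S (nxt 1))" "heq (act (\<tau> 1) (S 1)) (S 1)"
    using bspec[OF tau, of 1] by simp_all
  then show ?case by (simp add: act_act[symmetric] act_mat_1)
next
  case (Suc n)
  have \<tau>: "is_or_isom (\<tau> (Suc n))" "heq (act (\<tau> (Suc n)) (S (Suc n))) (S (Suc n))"
    "heq (act (\<tau> (Suc n)) (S n)) (S (nxt (Suc n)))"
    using bspec[OF tau, of "Suc n"] Suc.hyps Suc.prems by (simp_all add: prv_def)
  have "nxt n = Suc n" using Suc.prems by (simp add: nxt_def)
  then show ?case
    using Suc.IH Suc.prems heq_act_mult[OF \<tau>(1)] \<tau>(2,3) by auto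
qed

lemma compo_mult_eta:
  assumes "invertible (compo \<tau> (n - 1))" "1 \<le> n"
  shows "compo \<tau> (n - 1) ** eta \<tau> n = compo \<tau> n"
proof -
  have "compo \<tau> (n - 1) ** eta \<tau> n
      = (compo \<tau> (n - 1) ** matrix_inv (compo \<tau> (n - 1))) ** \<tau> n ** compo \<tau> (n - 1)"
    using assms(1) by (simp add: eta_def iota_def matrix_inv_matrix_inv matrix_mul_assoc)
  also have "\<dots> = compo \<tau> n" using assms by (cases n) (simp_all add: matrix_inv_right)
  finally show ?thesis .
qed

lemma iota_transports_ends:
  assumes tau: "\<forall>n\<in>{1..6}. is_or_isom (\<tau> n) \<and> heq (act (\<tau> n) (S n)) (S n) \<and>
                 heq (act (\<tau> n) (S (prv n))) (S (nxt n))"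
    and n: "1 \<le> n" "n \<le> 6"
  shows "heq (act (iota \<tau> n) (S n)) (S (if odd n then 1 else 6)) \<and>
         heq (act (iota \<tau> n) (S (nxt n))) (S (if odd n then 6 else 1))"
proof -
  have "is_or_isom (compo \<tau> n)" using tau n by (intro is_or_isom_compo) auto
  then show ?thesis
    using compo_transports_ends[OF tau n] heq_act_matrix_inv unfolding iota_def
    by (cases "odd n") auto
qed

lemma eta_product_eq_compo:
  assumes "\<forall>n\<in>{1..6}. is_or_isom (\<tau> n)"
  shows "eta \<tau> 1 ** eta \<tau> 2 ** eta \<tau> 3 ** eta \<tau> 4 ** eta \<tau> 5 ** eta \<tau> 6 = compo \<tau> 6"
proof -
  have step: "compo \<tau> (n - 1) ** eta \<tau> n = compo \<tau> n" if "1 \<le> n" "n \<le> 6" for n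
    using that assms
    by (intro compo_mult_eta is_or_isom_invertible is_or_isom_compo) auto
  show ?thesis
    using step[of 1] step[of 2] step[of 3] step[of 4] step[of 5] step[of 6]
    by (simp add: matrix_mul_assoc)
qed

theorem lemma6p6:
  fixes S :: "nat \<Rightarrow> hobj" and \<tau> :: "nat \<Rightarrow> mat5"
  assumes hex: "oriented_aug_hexagon S"
    and tau: "\<forall>n\<in>{1..6}. is_or_isom (\<tau> n) \<and> heq (act (\<tau> n) (S n)) (S n) \<and>
                 heq (act (\<tau> n) (S (prv n))) (S (nxt n))"
  shows "\<tau> 6 ** \<tau> 5 ** \<tau> 4 ** \<tau> 3 ** \<tau> 2 ** \<tau> 1 = mat 1 \<and>
         eta \<tau> 1 ** eta \<tau> 2 ** eta \<tau> 3 ** eta \<tau> 4 ** eta \<tau> 5 ** eta \<tau> 6 = mat 1 \<and>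
         (\<forall>n\<in>{1,3,5}. heq (act (iota \<tau> n) (S n)) (S 1) \<and> heq (act (iota \<tau> n) (S (nxt n))) (S 6)) \<and>
         (\<forall>n\<in>{2,4,6}. heq (act (iota \<tau> n) (S n)) (S 6) \<and> heq (act (iota \<tau> n) (S (nxt n))) (S 1))"
proof -
  have "nxt 6 = 1" by (simp add: nxt_def)
  then have "wf_hobj (S 6)" "wf_hobj (S 1)" "orth (S 6) (S 1)"
    using hex unfolding oriented_aug_hexagon_def by (metis atLeastAtMost_iff one_le_numeral order_refl)+
  moreover have "heq (act (compo \<tau> 6) (S 6)) (S 6)" "heq (act (compo \<tau> 6) (S 1)) (S 1)"
    using compo_transports_ends[OF tau, of 6] \<open>nxt 6 = 1\<close> by simp_all
  moreover have "is_or_isom (compo \<tau> 6)" using tau by (intro is_or_isom_compo) auto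
  ultimately have id: "compo \<tau> 6 = mat 1" by (intro is_or_isom_fixing_orth_pair_eq_mat_1)
  then have "\<tau> 6 ** \<tau> 5 ** \<tau> 4 ** \<tau> 3 ** \<tau> 2 ** \<tau> 1 = mat 1"
    by (simp add: numeral_eq_Suc matrix_mul_assoc)
  moreover have "eta \<tau> 1 ** eta \<tau> 2 ** eta \<tau> 3 ** eta \<tau> 4 ** eta \<tau> 5 ** eta \<tau> 6 = mat 1"
    using eta_product_eq_compo tau id by auto
  moreover have "\<forall>n\<in>{1,3,5}. heq (act (iota \<tau> n) (S n)) (S 1) \<and>
      heq (act (iota \<tau> n) (S (nxt n))) (S 6)"
    using iota_transports_ends[OF tau, of 1] iota_transports_ends[OF tau, of 3]
      iota_transports_ends[OF tau, of 5] by simp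
  moreover have "\<forall>n\<in>{2,4,6}. heq (act (iota \<tau> n) (S n)) (S 6) \<and>
      heq (act (iota \<tau> n) (S (nxt n))) (S 1)"
    using iota_transports_ends[OF tau, of 2] iota_transports_ends[OF tau, of 4]
      iota_transports_ends[OF tau, of 6] by simp
  ultimately show ?thesis by blast
qed

end
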